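(* For integers $1<k<n$, $f_n(\{k,k+1,\dots,n-1\})=2^{n-1}$.
   Context: For $m\ge1$ and a set $B$ of positive integers, $f_m(B)$ denotes the number of linear orders $q$ on $[m]$ such that for every triple $i<j<k$ in $[m]$: if $j\in B$ then $i$ is not ranked last among $\{i,j,k\}$ in $q$, and if $j\notin B$ then $k$ is not ranked first among $\{i,j,k\}$ in $q$. *)

theory Defs
  imports Main
begin

text \<open>A linear order q on [m] = {1..m} is a relation r with linear_order_on {1..m} r;
  (x,y) in r means x is ranked no later than y (x comes before y).
  "ranked first" = minimal, "ranked last" = maximal among the triple.\<close>

definition ranked_last :: "nat rel \<Rightarrow> nat \<Rightarrow> nat \<Rightarrow> nat \<Rightarrow> bool" where
  "ranked_last r x y z \<longleftrightarrow> (y, x) \<in> r \<and> (z, x) \<in> r"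

definition ranked_first :: "nat rel \<Rightarrow> nat \<Rightarrow> nat \<Rightarrow> nat \<Rightarrow> bool" where
  "ranked_first r x y z \<longleftrightarrow> (x, y) \<in> r \<and> (x, z) \<in> r"

definition good_order :: "nat \<Rightarrow> nat set \<Rightarrow> nat rel \<Rightarrow> bool" where
  "good_order m B r \<longleftrightarrow> linear_order_on {1..m} r \<and>
     (\<forall>i j k. 1 \<le> i \<and> i < j \<and> j < k \<and> k \<le> m \<longrightarrow>
        (j \<in> B \<longrightarrow> \<not> ranked_last r i j k) \<and>
        (j \<notin> B \<longrightarrow> \<not> ranked_first r k i j))"

definition f :: "nat \<Rightarrow> nat set \<Rightarrow> nat" where
  "f m B = card {r. good_order m B r}"

end

theory Submission
  imports Defs
begin

(* Generalise from [n] to any finite index set A on which B is upward closed, and induct on |A|.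
   Let a1 > a2 be the two largest indices. If a2 \<in> B, an index x < a2 can never be ranked
   last (it would be last in the triple x < a2 < a1), so every good order ends in a1 or a2;
   deleting that last element is a bijection onto the good orders of A - {a1}, resp. A - {a2},
   hence f(A) = 2 * 2^(|A|-2). If a2 \<notin> B, upward closure forces the second smallest index
   b2 out of B, and symmetrically every good order starts with one of the two smallest
   indices b1, b2. *)

lemma linear_order_onD:
  assumes "linear_order_on A r"
  shows "r \<subseteq> A \<times> A"
    and "\<And>a. a \<in> A \<Longrightarrow> (a, a) \<in> r"
    and "\<And>a b c. (a, b) \<in> r \<Longrightarrow> (b, c) \<in> r \<Longrightarrow> (a, c) \<in> r"
    and "\<And>a b. (a, b) \<in> r \<Longrightarrow> (b, a) \<in> r \<Longrightarrow> a = b"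
    and "\<And>a b. a \<in> A \<Longrightarrow> b \<in> A \<Longrightarrow> (a, b) \<in> r \<or> (b, a) \<in> r"
  using assms unfolding order_on_defs refl_on_def total_on_def
  by (auto dest: transD antisymD) (metis)

lemma linear_order_on_Restr_subset:
  assumes "linear_order_on A r" and "A' \<subseteq> A"
  shows "linear_order_on A' (Restr r A')"
  using assms unfolding order_on_defs refl_on_def trans_def antisym_def total_on_def by blast

lemma linear_order_on_extend_last:
  assumes "linear_order_on (A - {x}) r" and "x \<in> A"
  shows "linear_order_on A (r \<union> A \<times> {x})"
  using assms unfolding order_on_defs refl_on_def trans_def antisym_def total_on_def by blast

lemma linear_order_on_decompose_last:
  assumes "linear_order_on A r" and "\<forall>y\<in>A. (y, x) \<in> r"
  shows "Restr r (A - {x}) \<union> A \<times> {x} = r"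
  using assms unfolding order_on_defs refl_on_def antisym_def by blast

lemma linear_order_on_extend_first:
  assumes "linear_order_on (A - {x}) r" and "x \<in> A"
  shows "linear_order_on A (r \<union> {x} \<times> A)"
proof -
  have "linear_order_on A ((r\<inverse> \<union> A \<times> {x})\<inverse>)"
    using assms by (simp only: linear_order_on_converse linear_order_on_extend_last)
  then show ?thesis
    by (simp add: converse_Un converse_Times)
qed

lemma finite_linear_order_on_has_last:
  assumes "finite A" and "A \<noteq> {}" and "linear_order_on A r"
  shows "\<exists>x\<in>A. \<forall>y\<in>A. (y, x) \<in> r"
  using assms
proof (induction A arbitrary: r rule: finite_ne_induct)
  case (singleton x)
  then show ?case using linear_order_onD(2)[OF singleton.prems] by blast
next
  case (insert z F)
  obtain x where "x \<in> F" and x_last: "\<forall>y\<in>F. (y, x) \<in> r"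
    using insert.IH[OF linear_order_on_Restr_subset[OF insert.prems, of F]] by blast
  consider "(x, z) \<in> r" | "(z, x) \<in> r"
    using linear_order_onD(5)[OF insert.prems] \<open>x \<in> F\<close> by blast
  then show ?case
    using x_last \<open>x \<in> F\<close> linear_order_onD(2,3)[OF insert.prems] by cases blast+
qed

lemma card_linear_orders_with_last:
  assumes "x \<in> A"
  shows "card {r. linear_order_on A r \<and> (\<forall>y\<in>A. (y, x) \<in> r) \<and> P r}
       = card {r. linear_order_on (A - {x}) r \<and> P (r \<union> A \<times> {x})}"
proof (rule sym, rule bij_betw_same_card,
    rule bij_betw_byWitness[where f' = "\<lambda>r. Restr r (A - {x})"])
  show "\<forall>r\<in>{r. linear_order_on (A - {x}) r \<and> P (r \<union> A \<times> {x})}.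
      Restr (r \<union> A \<times> {x}) (A - {x}) = r"
  proof clarify
    fix r assume "linear_order_on (A - {x}) r"
    then have "r \<subseteq> (A - {x}) \<times> (A - {x})" by (rule linear_order_onD(1))
    then show "Restr (r \<union> A \<times> {x}) (A - {x}) = r" by blast
  qed
  show "\<forall>r\<in>{r. linear_order_on A r \<and> (\<forall>y\<in>A. (y, x) \<in> r) \<and> P r}.
      Restr r (A - {x}) \<union> A \<times> {x} = r"
    by (simp add: linear_order_on_decompose_last)
  show "(\<lambda>r. r \<union> A \<times> {x}) ` {r. linear_order_on (A - {x}) r \<and> P (r \<union> A \<times> {x})}
      \<subseteq> {r. linear_order_on A r \<and> (\<forall>y\<in>A. (y, x) \<in> r) \<and> P r}"
    using assms linear_order_on_extend_last by auto
  show "(\<lambda>r. Restr r (A - {x})) ` {r. linear_order_on A r \<and> (\<forall>y\<in>A. (y, x) \<in> r) \<and> P r}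
      \<subseteq> {r. linear_order_on (A - {x}) r \<and> P (r \<union> A \<times> {x})}"
  proof clarify
    fix r assume "linear_order_on A r" "\<forall>y\<in>A. (y, x) \<in> r" "P r"
    then show "linear_order_on (A - {x}) (Restr r (A - {x})) \<and> P (Restr r (A - {x}) \<union> A \<times> {x})"
      using linear_order_on_Restr_subset[of A r "A - {x}"] linear_order_on_decompose_last[of A r x]
      by simp
  qed
qed

lemma card_Collect_converse: "card {r. Q r} = card {r. Q (r\<inverse>)}"
proof -
  have "{r. Q r} = converse ` {r. Q (r\<inverse>)}"
    by (auto intro: image_eqI[where x = "_\<inverse>"])
  then show ?thesis
    by (simp add: card_image inj_on_def)
qed

lemma card_linear_orders_with_first:
  assumes "x \<in> A"
  shows "card {r. linear_order_on A r \<and> (\<forall>y\<in>A. (x, y) \<in> r) \<and> P r}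
       = card {r. linear_order_on (A - {x}) r \<and> P (r \<union> {x} \<times> A)}"
proof -
  have "card {r. linear_order_on A r \<and> (\<forall>y\<in>A. (x, y) \<in> r) \<and> P r}
      = card {r. linear_order_on A r \<and> (\<forall>y\<in>A. (y, x) \<in> r) \<and> P (r\<inverse>)}"
    by (subst card_Collect_converse) simp
  also have "\<dots> = card {r. linear_order_on (A - {x}) r \<and> P ((r \<union> A \<times> {x})\<inverse>)}"
    using assms by (rule card_linear_orders_with_last)
  also have "\<dots> = card {r. linear_order_on (A - {x}) r \<and> P (r \<union> {x} \<times> A)}"
    by (subst card_Collect_converse) (simp add: converse_Un converse_Times)
  finally show ?thesis .
qed

lemma card_Collect_split:
  assumes "finite {x. P x}"
    and "\<And>x. P x \<Longrightarrow> Q x \<or> R x" and "\<And>x. P x \<Longrightarrow> Q x \<Longrightarrow> R x \<Longrightarrow> False"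
  shows "card {x. P x} = card {x. P x \<and> Q x} + card {x. P x \<and> R x}"
proof -
  have "{x. P x} = {x. P x \<and> Q x} \<union> {x. P x \<and> R x}"
    using assms(2) by blast
  also have "card \<dots> = card {x. P x \<and> Q x} + card {x. P x \<and> R x}"
    using assms(1,3) by (intro card_Un_disjoint) (auto intro: finite_subset)
  finally show ?thesis .
qed

definition good_on :: "nat set \<Rightarrow> nat set \<Rightarrow> nat rel \<Rightarrow> bool" where
  "good_on A B r \<longleftrightarrow> linear_order_on A r \<and>
     (\<forall>i\<in>A. \<forall>j\<in>A. \<forall>k\<in>A. i < j \<longrightarrow> j < k \<longrightarrow>
        (j \<in> B \<longrightarrow> \<not> ranked_last r i j k) \<and> (j \<notin> B \<longrightarrow> \<not> ranked_first r k i j))"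

definition f_on :: "nat set \<Rightarrow> nat set \<Rightarrow> nat" where
  "f_on A B = card {r. good_on A B r}"

lemma good_order_iff_good_on: "good_order m B r \<longleftrightarrow> good_on {1..m} B r"
  unfolding good_order_def good_on_def by (auto 0 0)

lemma f_eq_f_on: "f m B = f_on {1..m} B"
  by (simp add: f_def f_on_def good_order_iff_good_on)

lemma finite_good_on: "finite A \<Longrightarrow> finite {r. good_on A B r}"
  by (rule finite_subset[of _ "Pow (A \<times> A)"]) (auto simp: good_on_def dest: linear_order_onD(1))

lemma good_on_Restr:
  assumes "good_on A B r" and "A' \<subseteq> A"
  shows "good_on A' B (Restr r A')"
  using assms linear_order_on_Restr_subset
  unfolding good_on_def ranked_last_def ranked_first_def by blast

lemma good_on_extend_last:
  assumes good: "good_on (A - {x}) B r" and "x \<in> A"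
    and above: "\<And>j k. j \<in> A \<Longrightarrow> k \<in> A \<Longrightarrow> x < j \<Longrightarrow> j < k \<Longrightarrow> False"
    and middle: "\<And>i k. i \<in> A \<Longrightarrow> k \<in> A \<Longrightarrow> i < x \<Longrightarrow> x < k \<Longrightarrow> x \<in> B"
  shows "good_on A B (r \<union> A \<times> {x})"
  unfolding good_on_def
proof (intro conjI ballI impI)
  have lin: "linear_order_on (A - {x}) r"
    using good by (simp add: good_on_def)
  then show "linear_order_on A (r \<union> A \<times> {x})"
    using \<open>x \<in> A\<close> by (rule linear_order_on_extend_last)
  have r_sub: "r \<subseteq> (A - {x}) \<times> (A - {x})"
    using lin by (rule linear_order_onD(1))
  fix i j k assume ijk: "i \<in> A" "j \<in> A" "k \<in> A" "i < j" "j < k"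
  show "\<not> ranked_last (r \<union> A \<times> {x}) i j k" if "j \<in> B"
  proof
    assume "ranked_last (r \<union> A \<times> {x}) i j k"
    moreover have "i \<noteq> x" using above ijk by blast
    ultimately have "ranked_last r i j k" "j \<noteq> x" "k \<noteq> x"
      using r_sub by (auto simp: ranked_last_def)
    then show False
      using good ijk \<open>i \<noteq> x\<close> \<open>j \<in> B\<close> by (auto simp: good_on_def)
  qed
  show "\<not> ranked_first (r \<union> A \<times> {x}) k i j" if "j \<notin> B"
  proof
    assume "ranked_first (r \<union> A \<times> {x}) k i j"
    moreover have "i \<noteq> x" using above ijk by blast
    moreover have "j \<noteq> x" using middle ijk \<open>j \<notin> B\<close> by blast
    ultimately have "ranked_first r k i j" "k \<noteq> x"
      using r_sub ijk by (auto simp: ranked_first_def)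
    then show False
      using good ijk \<open>i \<noteq> x\<close> \<open>j \<noteq> x\<close> \<open>j \<notin> B\<close> by (auto simp: good_on_def)
  qed
qed

lemma good_on_extend_first:
  assumes good: "good_on (A - {x}) B r" and "x \<in> A"
    and below: "\<And>i j. i \<in> A \<Longrightarrow> j \<in> A \<Longrightarrow> i < j \<Longrightarrow> j < x \<Longrightarrow> False"
    and middle: "\<And>i k. i \<in> A \<Longrightarrow> k \<in> A \<Longrightarrow> i < x \<Longrightarrow> x < k \<Longrightarrow> x \<notin> B"
  shows "good_on A B (r \<union> {x} \<times> A)"
  unfolding good_on_def
proof (intro conjI ballI impI)
  have lin: "linear_order_on (A - {x}) r"
    using good by (simp add: good_on_def)
  then show "linear_order_on A (r \<union> {x} \<times> A)"
    using \<open>x \<in> A\<close> by (rule linear_order_on_extend_first)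
  have r_sub: "r \<subseteq> (A - {x}) \<times> (A - {x})"
    using lin by (rule linear_order_onD(1))
  fix i j k assume ijk: "i \<in> A" "j \<in> A" "k \<in> A" "i < j" "j < k"
  have "k \<noteq> x" using below ijk by blast
  show "\<not> ranked_last (r \<union> {x} \<times> A) i j k" if "j \<in> B"
  proof
    assume "ranked_last (r \<union> {x} \<times> A) i j k"
    moreover have "j \<noteq> x" using middle ijk \<open>j \<in> B\<close> by blast
    ultimately have "ranked_last r i j k" "i \<noteq> x"
      using r_sub ijk \<open>k \<noteq> x\<close> by (auto simp: ranked_last_def)
    then show False
      using good ijk \<open>j \<noteq> x\<close> \<open>k \<noteq> x\<close> \<open>j \<in> B\<close> by (auto simp: good_on_def)
  qed
  show "\<not> ranked_first (r \<union> {x} \<times> A) k i j" if "j \<notin> B"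
  proof
    assume "ranked_first (r \<union> {x} \<times> A) k i j"
    then have "ranked_first r k i j" "i \<noteq> x" "j \<noteq> x"
      using r_sub \<open>k \<noteq> x\<close> by (auto simp: ranked_first_def)
    then show False
      using good ijk \<open>k \<noteq> x\<close> \<open>j \<notin> B\<close> by (auto simp: good_on_def)
  qed
qed

lemma f_on_with_last:
  assumes "x \<in> A"
    and "\<And>j k. j \<in> A \<Longrightarrow> k \<in> A \<Longrightarrow> x < j \<Longrightarrow> j < k \<Longrightarrow> False"
    and "\<And>i k. i \<in> A \<Longrightarrow> k \<in> A \<Longrightarrow> i < x \<Longrightarrow> x < k \<Longrightarrow> x \<in> B"
  shows "card {r. good_on A B r \<and> (\<forall>y\<in>A. (y, x) \<in> r)} = f_on (A - {x}) B"
proof -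
  have "{r. good_on A B r \<and> (\<forall>y\<in>A. (y, x) \<in> r)}
      = {r. linear_order_on A r \<and> (\<forall>y\<in>A. (y, x) \<in> r) \<and> good_on A B r}"
    by (auto simp: good_on_def)
  moreover have "{r. linear_order_on (A - {x}) r \<and> good_on A B (r \<union> A \<times> {x})}
      = {r. good_on (A - {x}) B r}"
  proof (intro Collect_cong iffI)
    fix r assume r: "linear_order_on (A - {x}) r \<and> good_on A B (r \<union> A \<times> {x})"
    then have "Restr (r \<union> A \<times> {x}) (A - {x}) = r"
      using linear_order_onD(1) by blast
    then show "good_on (A - {x}) B r"
      using good_on_Restr[of A B "r \<union> A \<times> {x}" "A - {x}"] r by simp
  next
    fix r assume r: "good_on (A - {x}) B r"
    then have "linear_order_on (A - {x}) r"
      by (simp add: good_on_def)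
    moreover have "good_on A B (r \<union> A \<times> {x})"
      using r assms by (rule good_on_extend_last)
    ultimately show "linear_order_on (A - {x}) r \<and> good_on A B (r \<union> A \<times> {x})" ..
  qed
  ultimately show ?thesis
    using card_linear_orders_with_last[OF assms(1)] by (simp add: f_on_def)
qed

lemma f_on_with_first:
  assumes "x \<in> A"
    and "\<And>i j. i \<in> A \<Longrightarrow> j \<in> A \<Longrightarrow> i < j \<Longrightarrow> j < x \<Longrightarrow> False"
    and "\<And>i k. i \<in> A \<Longrightarrow> k \<in> A \<Longrightarrow> i < x \<Longrightarrow> x < k \<Longrightarrow> x \<notin> B"
  shows "card {r. good_on A B r \<and> (\<forall>y\<in>A. (x, y) \<in> r)} = f_on (A - {x}) B"
proof -
  have "{r. good_on A B r \<and> (\<forall>y\<in>A. (x, y) \<in> r)}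
      = {r. linear_order_on A r \<and> (\<forall>y\<in>A. (x, y) \<in> r) \<and> good_on A B r}"
    by (auto simp: good_on_def)
  moreover have "{r. linear_order_on (A - {x}) r \<and> good_on A B (r \<union> {x} \<times> A)}
      = {r. good_on (A - {x}) B r}"
  proof (intro Collect_cong iffI)
    fix r assume r: "linear_order_on (A - {x}) r \<and> good_on A B (r \<union> {x} \<times> A)"
    then have "Restr (r \<union> {x} \<times> A) (A - {x}) = r"
      using linear_order_onD(1) by blast
    then show "good_on (A - {x}) B r"
      using good_on_Restr[of A B "r \<union> {x} \<times> A" "A - {x}"] r by simp
  next
    fix r assume r: "good_on (A - {x}) B r"
    then have "linear_order_on (A - {x}) r"
      by (simp add: good_on_def)
    moreover have "good_on A B (r \<union> {x} \<times> A)"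
      using r assms by (rule good_on_extend_first)
    ultimately show "linear_order_on (A - {x}) r \<and> good_on A B (r \<union> {x} \<times> A)" ..
  qed
  ultimately show ?thesis
    using card_linear_orders_with_first[OF assms(1)] by (simp add: f_on_def)
qed

lemma f_on_split_last:
  assumes "finite A" and "a1 \<in> A" and "a2 \<in> A" and "a2 < a1"
    and second: "\<And>y. y \<in> A \<Longrightarrow> y \<noteq> a1 \<Longrightarrow> y \<le> a2"
    and a2_in_B: "\<And>i. i \<in> A \<Longrightarrow> i < a2 \<Longrightarrow> a2 \<in> B"
  shows "f_on A B = f_on (A - {a1}) B + f_on (A - {a2}) B"
proof -
  have last_cases: "(\<forall>y\<in>A. (y, a1) \<in> r) \<or> (\<forall>y\<in>A. (y, a2) \<in> r)" if good: "good_on A B r" for r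
  proof -
    have lin: "linear_order_on A r" using good by (simp add: good_on_def)
    obtain x where "x \<in> A" and x_last: "\<forall>y\<in>A. (y, x) \<in> r"
      using finite_linear_order_on_has_last[OF \<open>finite A\<close> _ lin] \<open>a1 \<in> A\<close> by blast
    have "x = a1 \<or> x = a2"
    proof (rule ccontr)
      assume "\<not> (x = a1 \<or> x = a2)"
      then have "x < a2" using second[OF \<open>x \<in> A\<close>] by linarith
      then have "ranked_last r x a2 a1" "a2 \<in> B"
        using x_last \<open>a1 \<in> A\<close> \<open>a2 \<in> A\<close> a2_in_B \<open>x \<in> A\<close> by (auto simp: ranked_last_def)
      then show False
        using good \<open>x < a2\<close> \<open>a2 < a1\<close> \<open>x \<in> A\<close> \<open>a1 \<in> A\<close> \<open>a2 \<in> A\<close> by (auto simp: good_on_def)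
    qed
    then show ?thesis using x_last by blast
  qed
  have "f_on A B = card {r. good_on A B r \<and> (\<forall>y\<in>A. (y, a1) \<in> r)}
      + card {r. good_on A B r \<and> (\<forall>y\<in>A. (y, a2) \<in> r)}"
    unfolding f_on_def
  proof (rule card_Collect_split[OF finite_good_on[OF \<open>finite A\<close>] last_cases])
    fix r assume "good_on A B r" "\<forall>y\<in>A. (y, a1) \<in> r" "\<forall>y\<in>A. (y, a2) \<in> r"
    then have "linear_order_on A r" "(a1, a2) \<in> r" "(a2, a1) \<in> r"
      using \<open>a1 \<in> A\<close> \<open>a2 \<in> A\<close> by (auto simp: good_on_def)
    then have "a1 = a2" by (rule linear_order_onD(4))
    then show False using \<open>a2 < a1\<close> by simp
  qed
  also have "card {r. good_on A B r \<and> (\<forall>y\<in>A. (y, a1) \<in> r)} = f_on (A - {a1}) B"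
    using assms by (intro f_on_with_last) fastforce+
  also have "card {r. good_on A B r \<and> (\<forall>y\<in>A. (y, a2) \<in> r)} = f_on (A - {a2}) B"
  proof (rule f_on_with_last)
    fix j k assume "j \<in> A" "k \<in> A" "a2 < j" "j < k"
    then have "j = a1" "k = a1" using second by (meson less_trans not_le)+
    then show False using \<open>j < k\<close> by simp
  qed (use assms in auto)
  finally show ?thesis .
qed

lemma f_on_split_first:
  assumes "finite A" and "b1 \<in> A" and "b2 \<in> A" and "b1 < b2"
    and second: "\<And>y. y \<in> A \<Longrightarrow> y \<noteq> b1 \<Longrightarrow> b2 \<le> y"
    and b2_notin_B: "\<And>k. k \<in> A \<Longrightarrow> b2 < k \<Longrightarrow> b2 \<notin> B"
  shows "f_on A B = f_on (A - {b1}) B + f_on (A - {b2}) B"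
proof -
  have first_cases: "(\<forall>y\<in>A. (b1, y) \<in> r) \<or> (\<forall>y\<in>A. (b2, y) \<in> r)" if good: "good_on A B r" for r
  proof -
    have lin: "linear_order_on A (r\<inverse>)" using good by (simp add: good_on_def)
    obtain x where "x \<in> A" and x_first: "\<forall>y\<in>A. (x, y) \<in> r"
      using finite_linear_order_on_has_last[OF \<open>finite A\<close> _ lin] \<open>b1 \<in> A\<close> by blast
    have "x = b1 \<or> x = b2"
    proof (rule ccontr)
      assume "\<not> (x = b1 \<or> x = b2)"
      then have "b2 < x" using second[OF \<open>x \<in> A\<close>] by linarith
      then have "ranked_first r x b1 b2" "b2 \<notin> B"
        using x_first \<open>b1 \<in> A\<close> \<open>b2 \<in> A\<close> b2_notin_B \<open>x \<in> A\<close> by (auto simp: ranked_first_def)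
      then show False
        using good \<open>b2 < x\<close> \<open>b1 < b2\<close> \<open>x \<in> A\<close> \<open>b1 \<in> A\<close> \<open>b2 \<in> A\<close> by (auto simp: good_on_def)
    qed
    then show ?thesis using x_first by blast
  qed
  have "f_on A B = card {r. good_on A B r \<and> (\<forall>y\<in>A. (b1, y) \<in> r)}
      + card {r. good_on A B r \<and> (\<forall>y\<in>A. (b2, y) \<in> r)}"
    unfolding f_on_def
  proof (rule card_Collect_split[OF finite_good_on[OF \<open>finite A\<close>] first_cases])
    fix r assume "good_on A B r" "\<forall>y\<in>A. (b1, y) \<in> r" "\<forall>y\<in>A. (b2, y) \<in> r"
    then have "linear_order_on A r" "(b1, b2) \<in> r" "(b2, b1) \<in> r"
      using \<open>b1 \<in> A\<close> \<open>b2 \<in> A\<close> by (auto simp: good_on_def)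
    then have "b1 = b2" by (rule linear_order_onD(4))
    then show False using \<open>b1 < b2\<close> by simp
  qed
  also have "card {r. good_on A B r \<and> (\<forall>y\<in>A. (b1, y) \<in> r)} = f_on (A - {b1}) B"
    using assms by (intro f_on_with_first) fastforce+
  also have "card {r. good_on A B r \<and> (\<forall>y\<in>A. (b2, y) \<in> r)} = f_on (A - {b2}) B"
  proof (rule f_on_with_first)
    fix i j assume "i \<in> A" "j \<in> A" "i < j" "j < b2"
    then have "i = b1" "j = b1" using second by (meson less_trans not_le)+
    then show False using \<open>i < j\<close> by simp
  qed (use assms in auto)
  finally show ?thesis .
qed

lemma f_on_singleton: "f_on {a} B = 1"
proof -
  have "good_on {a} B r \<longleftrightarrow> r = {(a, a)}" for r
  proof
    assume "good_on {a} B r"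
    then have "linear_order_on {a} r" by (simp add: good_on_def)
    then show "r = {(a, a)}"
      using linear_order_onD(1,2)[of "{a}" r] by blast
  qed (simp add: good_on_def)
  then show ?thesis by (simp add: f_on_def)
qed

lemma obtain_two_largest:
  fixes A :: "'a::linorder set"
  assumes "finite A" and "2 \<le> card A"
  obtains a1 a2 where "a1 \<in> A" "a2 \<in> A" "a2 < a1" "\<And>y. y \<in> A \<Longrightarrow> y \<noteq> a1 \<Longrightarrow> y \<le> a2"
proof
  have "A - {Max A} \<noteq> {}"
  proof
    assume "A - {Max A} = {}"
    then have "card A \<le> card {Max A}" by (intro card_mono) auto
    with assms(2) show False by simp
  qed
  then have "Max (A - {Max A}) \<in> A - {Max A}"
    using assms(1) by (intro Max_in) auto
  then show "Max A \<in> A" "Max (A - {Max A}) \<in> A" "Max (A - {Max A}) < Max A"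
    using assms(1) by (auto simp: order.strict_iff_order intro: Max_in)
  show "y \<le> Max (A - {Max A})" if "y \<in> A" "y \<noteq> Max A" for y
    using assms(1) that by simp
qed

lemma obtain_two_smallest:
  fixes A :: "'a::linorder set"
  assumes "finite A" and "2 \<le> card A"
  obtains b1 b2 where "b1 \<in> A" "b2 \<in> A" "b1 < b2" "\<And>y. y \<in> A \<Longrightarrow> y \<noteq> b1 \<Longrightarrow> b2 \<le> y"
proof
  have "A - {Min A} \<noteq> {}"
  proof
    assume "A - {Min A} = {}"
    then have "card A \<le> card {Min A}" by (intro card_mono) auto
    with assms(2) show False by simp
  qed
  then have "Min (A - {Min A}) \<in> A - {Min A}"
    using assms(1) by (intro Min_in) auto
  then show "Min A \<in> A" "Min (A - {Min A}) \<in> A" "Min A < Min (A - {Min A})"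
    using assms(1) by (auto simp: order.strict_iff_order intro: Min_in)
  show "Min (A - {Min A}) \<le> y" if "y \<in> A" "y \<noteq> Min A" for y
    using assms(1) that by simp
qed

(* The largest index of A is exempt: it is never the middle of a triple, and n \<notin> {k..n-1}. *)
definition upward_closed_in :: "nat set \<Rightarrow> nat set \<Rightarrow> bool" where
  "upward_closed_in A B \<longleftrightarrow> (\<forall>x\<in>A. \<forall>y\<in>A. \<forall>z\<in>A. x < y \<longrightarrow> y < z \<longrightarrow> x \<in> B \<longrightarrow> y \<in> B)"

lemma upward_closed_in_subset: "upward_closed_in A B \<Longrightarrow> A' \<subseteq> A \<Longrightarrow> upward_closed_in A' B"
  unfolding upward_closed_in_def by blast

lemma f_on_remove_two:
  assumes "finite A" and "2 \<le> card A" and up: "upward_closed_in A B"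
  obtains x1 x2 where "x1 \<in> A" "x2 \<in> A"
    and "f_on A B = f_on (A - {x1}) B + f_on (A - {x2}) B"
proof -
  obtain a1 a2 where a: "a1 \<in> A" "a2 \<in> A" "a2 < a1" "\<And>y. y \<in> A \<Longrightarrow> y \<noteq> a1 \<Longrightarrow> y \<le> a2"
    using obtain_two_largest[OF assms(1,2)] by blast
  obtain b1 b2 where b: "b1 \<in> A" "b2 \<in> A" "b1 < b2" "\<And>y. y \<in> A \<Longrightarrow> y \<noteq> b1 \<Longrightarrow> b2 \<le> y"
    using obtain_two_smallest[OF assms(1,2)] by blast
  show ?thesis
  proof (cases "\<forall>i\<in>A. i < a2 \<longrightarrow> a2 \<in> B")
    case True
    then have "f_on A B = f_on (A - {a1}) B + f_on (A - {a2}) B"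
      using \<open>finite A\<close> a by (intro f_on_split_last) auto
    then show ?thesis
      using that a by blast
  next
    case False
    then obtain i where "i \<in> A" "i < a2" "a2 \<notin> B" by blast
    have "b2 \<notin> B"
    proof
      assume "b2 \<in> B"
      have "b2 \<le> a2"
        using b(4)[OF \<open>a2 \<in> A\<close>] b(4)[OF \<open>i \<in> A\<close>] \<open>i < a2\<close> by fastforce
      then have "a2 \<in> B"
        using up \<open>b2 \<in> B\<close> a b(2) unfolding upward_closed_in_def
        by (metis le_neq_implies_less)
      with \<open>a2 \<notin> B\<close> show False ..
    qed
    then have "f_on A B = f_on (A - {b1}) B + f_on (A - {b2}) B"
      using \<open>finite A\<close> b by (intro f_on_split_first) auto
    then show ?thesis
      using that b by blast
  qed
qed

theorem f_on_upward_closed: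
  assumes "finite A" and "A \<noteq> {}" and "upward_closed_in A B"
  shows "f_on A B = 2 ^ (card A - 1)"
  using assms
proof (induction A rule: finite_remove_induct)
  case empty
  then show ?case by simp
next
  case (remove A)
  show ?case
  proof (cases "card A = 1")
    case True
    then show ?thesis by (auto simp: card_1_singleton_iff f_on_singleton)
  next
    case False
    moreover have "card A \<noteq> 0"
      using remove.hyps(1,2) by simp
    ultimately have "2 \<le> card A" by linarith
    have IH: "f_on (A - {x}) B = 2 ^ (card A - 2)" if "x \<in> A" for x
    proof -
      have "card (A - {x}) = card A - 1"
        using remove.hyps(1) that by simp
      moreover have "A - {x} \<noteq> {}"
      proof
        assume "A - {x} = {}"
        with calculation \<open>2 \<le> card A\<close> show False by simp
      qed
      ultimately show ?thesis
        using remove.IH[OF that] remove.prems(2) upward_closed_in_subset by simp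
    qed
    obtain x1 x2 where "x1 \<in> A" "x2 \<in> A"
      and "f_on A B = f_on (A - {x1}) B + f_on (A - {x2}) B"
      using f_on_remove_two[OF remove.hyps(1) \<open>2 \<le> card A\<close> remove.prems(2)] by blast
    moreover have "card A - 1 = Suc (card A - 2)"
      using \<open>2 \<le> card A\<close> by simp
    ultimately show ?thesis
      using IH by simp
  qed
qed

theorem proposition8:
  fixes k n :: nat
  assumes "1 < k" and "k < n"
  shows "f n {k..n-1} = 2 ^ (n - 1)"
proof -
  have "upward_closed_in {1..n} {k..n-1}"
    unfolding upward_closed_in_def by auto
  moreover have "{1..n} \<noteq> {}"
    using assms by simp
  ultimately show ?thesis
    by (simp add: f_eq_f_on f_on_upward_closed)
qed

end
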